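(* There exist absolute positive constants $c,C$ such that the following holds. Let ${\cal J}$ be a finite index set and $X_i$, $i\in{\cal J}$, independent $\{0,1\}$-valued random variables with $P(X_i=1)=p_i$, $\lambda=\sum_{i\in{\cal J}}p_i>0$, $\tilde p=\max_{i\in{\cal J}}p_i$, and $W=\sum_{i\in{\cal J}}X_i$. Let $Y\sim\mathrm{Poi}(\lambda)$. Then for every integer $k\ge\lambda$ with $\tilde p(1+\xi^2)\le c$, where $\xi=(k-\lambda)/\sqrt\lambda$, $$\Big|\frac{P(W\ge k)}{P(Y\ge k)}-1\Big|\le C\tilde p(1+\xi^2).$$
   Context: $\mathrm{Poi}(\lambda)$ is the Poisson distribution with mean $\lambda$. *)

theory Defs
  imports "HOL-Probability.Probability"
begin

definition bernoulli_sum_pmf :: "nat set \<Rightarrow> (nat \<Rightarrow> real) \<Rightarrow> nat pmf" where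
  "bernoulli_sum_pmf J p =
     map_pmf (\<lambda>X. card {i\<in>J. X i}) (Pi_pmf J False (\<lambda>i. bernoulli_pmf (p i)))"

end

theory Submission
  imports Defs
begin

text \<open>
  Write \<open>W = \<Sum>i\<in>J. X i\<close>, \<open>\<lambda> = \<Sum>i\<in>J. p i\<close>, \<open>p\<^sub>* = max p i\<close>,
  \<open>G j = P(W \<ge> j)\<close> and \<open>T j = P(Y \<ge> j)\<close> for \<open>Y \<sim> Poi(\<lambda>)\<close>.  The proof is Stein's method.

  For each threshold \<open>j\<close> the explicit solution \<open>g\<^sub>j\<close> of the Stein equation
  \<open>\<lambda> g(l+1) - l g(l) = [l \<ge> j] - T j\<close> turns \<open>G j - T j\<close> into \<open>E[\<lambda> g(W+1) - W g(W)]\<close>, and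
  the size-bias identity for Bernoulli sums rewrites this as
  \<open>\<Sum>i. p i\<^sup>2 E[g(W\<^sub>i+2) - g(W\<^sub>i+1)]\<close> with \<open>W\<^sub>i = W - X i\<close>.  Below \<open>j\<close> the increments of \<open>g\<^sub>j\<close>
  equal \<open>T j\<close> times the increments of the ratio \<open>a l = P(Y \<le> l) / P(Y = l)\<close>; above \<open>j\<close> they
  lie in \<open>[0, 1/\<lambda>]\<close>.  Summation by parts bounds \<open>E[\<Delta>a(W\<^sub>i); W\<^sub>i < j-1]\<close> by tail
  probabilities \<open>G m\<close>, \<open>\<lambda> < m < j\<close>, and these are at most \<open>R\<cdot>T m\<close>, where \<open>R\<close> is the maximum of
  \<open>G m / T m\<close> over \<open>\<lambda> \<le> m \<le> k\<close>.  The result is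
  \<open>|G j / T j - 1| \<le> p\<^sub>* (1 + \<xi>\<^sup>2) (96 + 7R)\<close> for all such \<open>j\<close>; taking \<open>j\<close> at the maximum gives
  \<open>R \<le> 16\<close> once \<open>p\<^sub>*(1+\<xi>\<^sup>2) \<le> 1/14\<close>, whence the theorem with \<open>c = 1/14\<close> and \<open>C = 208\<close>.
\<close>

subsection \<open>Poisson probabilities and the ratios \<open>a\<close> and \<open>b\<close>\<close>

definition pois :: "real \<Rightarrow> nat \<Rightarrow> real" where
  "pois lam l = lam ^ l / fact l * exp (-lam)"

definition pois_cdf :: "real \<Rightarrow> nat \<Rightarrow> real" where
  "pois_cdf lam l = (\<Sum>m\<le>l. pois lam m)"

definition pois_tail :: "real \<Rightarrow> nat \<Rightarrow> real" where
  "pois_tail lam l = 1 - (\<Sum>m<l. pois lam m)"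

text \<open>\<open>a l = P(Y \<le> l) / P(Y = l)\<close> and \<open>b l = P(Y > l) / P(Y = l)\<close>; the Stein solution is built
  from these two ratios.\<close>

definition cdf_ratio :: "real \<Rightarrow> nat \<Rightarrow> real" where
  "cdf_ratio lam l = pois_cdf lam l / pois lam l"

definition upper_ratio :: "real \<Rightarrow> nat \<Rightarrow> real" where
  "upper_ratio lam l = (1 - pois_cdf lam l) / pois lam l"

definition cdf_incr :: "real \<Rightarrow> nat \<Rightarrow> real" where
  "cdf_incr lam l = cdf_ratio lam (Suc l) - cdf_ratio lam l"

context
  fixes lam :: real
  assumes lam: "lam > 0"
begin

lemma pois_pos: "pois lam l > 0"
  using lam by (simp add: pois_def)

lemma pois_Suc: "pois lam (Suc l) = lam * pois lam l / real (Suc l)"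
  by (simp add: pois_def field_simps)

lemma pmf_poisson_eq: "pmf (poisson_pmf lam) l = pois lam l"
  using lam by (simp add: pois_def)

lemma cdf_0: "pois_cdf lam 0 = pois lam 0"
  by (simp add: pois_cdf_def)

lemma cdf_Suc: "pois_cdf lam (Suc l) = pois_cdf lam l + pois lam (Suc l)"
  by (simp add: pois_cdf_def)

lemma cdf_eq_prob: "pois_cdf lam l = measure_pmf.prob (poisson_pmf lam) {..l}"
  by (simp add: pois_cdf_def measure_measure_pmf_finite pmf_poisson_eq)

lemma cdf_le1: "pois_cdf lam l \<le> 1"
  by (simp add: cdf_eq_prob)

lemma cdf_pos: "pois_cdf lam l > 0"
proof -
  have "pois lam l \<le> pois_cdf lam l"
    unfolding pois_cdf_def by (rule member_le_sum) (auto intro: less_imp_le pois_pos)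
  then show ?thesis using pois_pos[of l] by linarith
qed

lemma sum_pois_le1: "A \<subseteq> {..n} \<Longrightarrow> (\<Sum>l\<in>A. pois lam l) \<le> 1"
  using sum_mono2[of "{..n}" A "pois lam"] pois_pos cdf_le1[of n]
  by (force simp: pois_cdf_def less_imp_le)

lemma tail_Suc: "pois_tail lam (Suc l) = 1 - pois_cdf lam l"
  by (simp add: pois_tail_def pois_cdf_def lessThan_Suc_atMost)

lemma tail_rec: "pois_tail lam m = pois_tail lam (Suc m) + pois lam m"
  by (simp add: pois_tail_def)

lemma tail_eq_prob: "measure_pmf.prob (poisson_pmf lam) {l..} = pois_tail lam l"
proof -
  have "{l..} = UNIV - {..<l}" by auto
  then have "measure_pmf.prob (poisson_pmf lam) {l..}
      = 1 - measure_pmf.prob (poisson_pmf lam) {..<l}"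
    by (simp add: measure_pmf.finite_measure_Diff measure_pmf.prob_space)
  also have "\<dots> = pois_tail lam l"
    by (simp add: pois_tail_def measure_measure_pmf_finite pmf_poisson_eq)
  finally show ?thesis .
qed

lemma tail_ge: "pois_tail lam l \<ge> pois lam l"
  using tail_rec[of l] tail_Suc[of l] cdf_le1[of l] by simp

lemma tail_pos: "pois_tail lam l > 0"
  using tail_ge pois_pos[of l] by (meson less_le_trans)

lemma sum_pois_interval: "m \<le> Suc e \<Longrightarrow> (\<Sum>l\<in>{m..e}. pois lam l) = pois_tail lam m - pois_tail lam (Suc e)"
proof -
  assume "m \<le> Suc e"
  then have "{..<Suc e} = {..<m} \<union> {m..e}" by auto
  then have "(\<Sum>l<Suc e. pois lam l) = (\<Sum>l<m. pois lam l) + (\<Sum>l\<in>{m..e}. pois lam l)"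
    by (simp add: sum.union_disjoint ivl_disj_int)
  then show ?thesis by (simp add: pois_tail_def)
qed

text \<open>The classical tail bound \<open>P(Y > m) (m + 1 - \<lambda>) \<le> \<lambda> P(Y = m)\<close> for \<open>m + 1 > \<lambda>\<close>: the
  ratios of consecutive Poisson weights beyond \<open>m\<close> are at most \<open>\<lambda>/(m+1)\<close>.  It holds for
  every partial sum (by induction) and hence in the limit.\<close>

lemma partial_tail_bound:
  "m \<le> N \<Longrightarrow> real m + 1 > lam \<Longrightarrow>
   (pois_cdf lam N - pois_cdf lam m) * (real m + 1 - lam) \<le> lam * (pois lam m - pois lam N)"
proof (induction N rule: dec_induct)
  case base then show ?case by simp
next
  case (step N)
  have e: "lam * pois lam N = real (Suc N) * pois lam (Suc N)" by (simp add: pois_Suc)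
  have "pois lam (Suc N) * (real m + 1 - lam) \<le> pois lam (Suc N) * (real (Suc N) - lam)"
    using step pois_pos[of "Suc N"] by (intro mult_left_mono) auto
  then show ?case using step by (simp add: cdf_Suc algebra_simps e)
qed

lemma tail_bound:
  assumes "real m + 1 > lam"
  shows "(1 - pois_cdf lam m) * (real m + 1 - lam) \<le> lam * pois lam m"
proof -
  have "(\<lambda>N. pois_cdf lam N) \<longlonglongrightarrow> measure_pmf.prob (poisson_pmf lam) (\<Union>N. {..N})"
    unfolding cdf_eq_prob by (rule measure_pmf.finite_Lim_measure_incseq) (auto simp: incseq_def)
  moreover have "(\<Union>N. {..N::nat}) = UNIV" by auto
  ultimately have "(\<lambda>N. (pois_cdf lam N - pois_cdf lam m) * (real m + 1 - lam))
      \<longlonglongrightarrow> (1 - pois_cdf lam m) * (real m + 1 - lam)"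
    by (auto intro!: tendsto_intros)
  moreover have "\<forall>\<^sub>F N in sequentially.
      (pois_cdf lam N - pois_cdf lam m) * (real m + 1 - lam) \<le> lam * pois lam m"
    using eventually_ge_at_top[of m]
  proof eventually_elim
    case (elim N)
    have "lam * pois lam N > 0" using pois_pos[of N] lam by simp
    then show ?case using partial_tail_bound[OF elim assms] by (simp add: algebra_simps)
  qed
  ultimately show ?thesis by (rule tendsto_upperbound) simp
qed

lemma upper_ratio_nonneg: "upper_ratio lam l \<ge> 0"
  using cdf_le1[of l] pois_pos[of l] by (simp add: upper_ratio_def)

lemma upper_ratio_tail: "real m + 1 > lam \<Longrightarrow> upper_ratio lam m * (real m + 1 - lam) \<le> lam"
  using tail_bound[of m] pois_pos[of m]
  by (simp add: upper_ratio_def divide_simps mult.commute)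

lemma upper_ratio_rec: "upper_ratio lam l = lam / real (Suc l) * (1 + upper_ratio lam (Suc l))"
proof -
  have p: "pois lam l > 0" by (rule pois_pos)
  have "upper_ratio lam (Suc l)
      = (1 - pois_cdf lam l - lam * pois lam l / real (Suc l)) / (lam * pois lam l / real (Suc l))"
    by (simp add: upper_ratio_def cdf_Suc pois_Suc)
  also have "\<dots> = (1 - pois_cdf lam l) * real (Suc l) / (lam * pois lam l) - 1"
    using p lam by (simp add: divide_simps)
  finally show ?thesis using p lam by (simp add: upper_ratio_def)
qed

lemma cdf_ratio_0: "cdf_ratio lam 0 = 1"
  using pois_pos[of 0] by (simp add: cdf_ratio_def cdf_0)

lemma cdf_ratio_Suc: "cdf_ratio lam (Suc l) = 1 + cdf_ratio lam l * real (Suc l) / lam"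
proof -
  have p: "pois lam l > 0" by (rule pois_pos)
  have "cdf_ratio lam (Suc l)
      = (pois_cdf lam l + lam * pois lam l / real (Suc l)) / (lam * pois lam l / real (Suc l))"
    by (simp add: cdf_ratio_def cdf_Suc pois_Suc)
  also have "\<dots> = pois_cdf lam l * real (Suc l) / (lam * pois lam l) + 1"
    using p lam by (simp add: divide_simps)
  finally show ?thesis using p lam by (simp add: cdf_ratio_def)
qed

lemma cdf_ratio_nonneg: "cdf_ratio lam l \<ge> 0"
  using cdf_pos[of l] pois_pos[of l] by (simp add: cdf_ratio_def)

text \<open>Below the mean, \<open>a l \<le> \<lambda> / (\<lambda> - l)\<close>; this is what keeps the increments of \<open>a\<close>
  nonnegative.\<close>

lemma cdf_ratio_below_mean: "cdf_ratio lam l * (lam - real l) \<le> lam"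
proof (induction l)
  case 0 then show ?case by (simp add: cdf_ratio_0)
next
  case (Suc l)
  show ?case
  proof (cases "real l + 1 < lam")
    case True
    have h: "cdf_ratio lam l \<le> lam / (lam - real l)" using Suc True by (simp add: field_simps)
    have "cdf_ratio lam (Suc l) * (lam - real (Suc l))
        = (lam - real l - 1) + cdf_ratio lam l * (real l + 1) * (lam - real l - 1) / lam"
      using lam by (simp add: cdf_ratio_Suc field_simps)
    also have "\<dots> \<le> (lam - real l - 1) + (lam / (lam - real l)) * (real l + 1) * (lam - real l - 1) / lam"
      using h True lam by (intro add_left_mono divide_right_mono mult_right_mono) auto
    also have "\<dots> \<le> lam"
      using True lam by (simp add: field_simps)
    finally show ?thesis .
  next
    case False
    then have "cdf_ratio lam (Suc l) * (lam - real (Suc l)) \<le> 0"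
      using cdf_ratio_nonneg[of "Suc l"] by (simp add: mult_nonneg_nonpos)
    then show ?thesis using lam by linarith
  qed
qed

lemma cdf_incr_eq: "cdf_incr lam l = 1 + cdf_ratio lam l * (real l + 1 - lam) / lam"
  using lam by (simp add: cdf_incr_def cdf_ratio_Suc field_simps)

lemma cdf_incr_nonneg: "cdf_incr lam l \<ge> 0"
proof -
  have "cdf_ratio lam l * (lam - real l - 1) \<le> cdf_ratio lam l * (lam - real l)"
    using cdf_ratio_nonneg[of l] by (intro mult_left_mono) auto
  then show ?thesis using cdf_ratio_below_mean[of l] lam by (simp add: cdf_incr_eq field_simps)
qed

lemma cdf_incr_le1: "real l + 1 \<le> lam \<Longrightarrow> cdf_incr lam l \<le> 1"
  using cdf_ratio_nonneg[of l] lam by (simp add: cdf_incr_eq divide_nonpos_pos mult_nonneg_nonpos)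

lemma cdf_incr_ge1: "real l + 1 \<ge> lam \<Longrightarrow> cdf_incr lam l \<ge> 1"
  using cdf_ratio_nonneg[of l] lam by (simp add: cdf_incr_eq)

lemma cdf_incr_mono: "real m + 2 \<ge> lam \<Longrightarrow> cdf_incr lam m \<le> cdf_incr lam (Suc m)"
proof -
  assume m: "real m + 2 \<ge> lam"
  have "lam * (cdf_incr lam (Suc m) - cdf_incr lam m)
      = (real m + 2 - lam) + cdf_ratio lam m * ((real m + 1 - lam)^2 + real m + 1) / lam"
    using lam by (simp add: cdf_incr_eq cdf_ratio_Suc field_simps power2_eq_square)
  also have "\<dots> \<ge> 0"
    using m lam cdf_ratio_nonneg[of m] by (intro add_nonneg_nonneg divide_nonneg_pos mult_nonneg_nonneg) auto
  finally show ?thesis using lam by (simp add: zero_le_mult_iff)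
qed

lemma cdf_incr_floor: "cdf_incr lam (nat \<lfloor>lam\<rfloor>) \<le> 2 + 1 / lam"
proof -
  let ?l = "nat \<lfloor>lam\<rfloor>"
  have a: "cdf_ratio lam ?l \<le> 1 + lam"
  proof (cases ?l)
    case 0 then show ?thesis using cdf_ratio_0 lam by simp
  next
    case (Suc k)
    have k: "real k + 1 \<le> lam" using Suc lam by linarith
    have "cdf_ratio lam k \<le> cdf_ratio lam k * (lam - real k)"
      using cdf_ratio_nonneg[of k] k by (simp add: mult_le_cancel_left1)
    then have "cdf_ratio lam k \<le> lam" using cdf_ratio_below_mean[of k] by linarith
    then have "cdf_ratio lam k * real (Suc k) / lam \<le> real (Suc k)"
      using lam by (simp add: divide_simps mult_right_mono)
    then show ?thesis using cdf_ratio_Suc[of k] Suc k by simp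
  qed
  have r: "real ?l + 1 - lam \<le> 1" "real ?l + 1 - lam \<ge> 0" using lam by linarith+
  have "cdf_ratio lam ?l * (real ?l + 1 - lam) \<le> (1 + lam) * 1"
    using a cdf_ratio_nonneg[of ?l] r by (intro mult_mono) auto
  then have "cdf_ratio lam ?l * (real ?l + 1 - lam) / lam \<le> (1 + lam) / lam"
    using lam by (simp add: divide_right_mono)
  then show ?thesis using lam by (simp add: cdf_incr_eq add_divide_distrib)
qed

end

subsection \<open>The law of a Bernoulli sum\<close>

lemma bernoulli_sum_insert:
  assumes "finite A" "a \<notin> A"
  shows "bernoulli_sum_pmf (insert a A) p =
    bind_pmf (bernoulli_pmf (p a)) (\<lambda>y. map_pmf (\<lambda>w. if y then Suc w else w) (bernoulli_sum_pmf A p))"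
proof -
  have card_upd: "card {i\<in>insert a A. (f(a:=y)) i} = (if y then Suc (card {i\<in>A. f i}) else card {i\<in>A. f i})"
    for f :: "nat \<Rightarrow> bool" and y
  proof -
    have "{i\<in>insert a A. (f(a:=y)) i} = (if y then insert a {i\<in>A. f i} else {i\<in>A. f i})"
      using assms by auto
    then show ?thesis using assms by auto
  qed
  have "bernoulli_sum_pmf (insert a A) p =
     map_pmf (\<lambda>X. card {i\<in>insert a A. X i})
       (bind_pmf (bernoulli_pmf (p a))
          (\<lambda>y. bind_pmf (Pi_pmf A False (\<lambda>i. bernoulli_pmf (p i))) (\<lambda>f. return_pmf (f(a := y)))))"
    unfolding bernoulli_sum_pmf_def using assms by (subst Pi_pmf_insert') auto
  also have "\<dots> = bind_pmf (bernoulli_pmf (p a)) (\<lambda>y. bind_pmf (Pi_pmf A False (\<lambda>i. bernoulli_pmf (p i)))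
      (\<lambda>f. return_pmf (card {i\<in>insert a A. (f(a := y)) i})))"
    by (simp add: map_bind_pmf map_return_pmf)
  also have "\<dots> = bind_pmf (bernoulli_pmf (p a)) (\<lambda>y. bind_pmf (Pi_pmf A False (\<lambda>i. bernoulli_pmf (p i)))
      (\<lambda>f. return_pmf (if y then Suc (card {i\<in>A. f i}) else card {i\<in>A. f i})))"
    by (simp only: card_upd)
  also have "\<dots> = bind_pmf (bernoulli_pmf (p a)) (\<lambda>y. map_pmf (\<lambda>w. if y then Suc w else w) (bernoulli_sum_pmf A p))"
    unfolding bernoulli_sum_pmf_def by (simp add: map_pmf_def bind_assoc_pmf bind_return_pmf)
  finally show ?thesis .
qed

definition bsum_prob :: "nat set \<Rightarrow> (nat \<Rightarrow> real) \<Rightarrow> nat \<Rightarrow> real" where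
  "bsum_prob A p l = pmf (bernoulli_sum_pmf A p) l"

text \<open>The pmf of a sum shifted by one, with the convention \<open>P(W = -1) = 0\<close>.\<close>

definition bsum_prob_pred :: "nat set \<Rightarrow> (nat \<Rightarrow> real) \<Rightarrow> nat \<Rightarrow> real" where
  "bsum_prob_pred A p l = (case l of 0 \<Rightarrow> 0 | Suc m \<Rightarrow> bsum_prob A p m)"

lemma bsum_prob_insert:
  assumes "finite A" "a \<notin> A" "0 \<le> p a" "p a \<le> 1"
  shows "bsum_prob (insert a A) p l = (1 - p a) * bsum_prob A p l + p a * bsum_prob_pred A p l"
proof -
  have "pmf (map_pmf Suc (bernoulli_sum_pmf A p)) l = bsum_prob_pred A p l"
  proof (cases l)
    case 0
    then show ?thesis by (simp add: bsum_prob_pred_def pmf_map vimage_def)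
  next
    case (Suc m)
    then show ?thesis using pmf_map_inj'[of Suc] by (simp add: bsum_prob_pred_def bsum_prob_def)
  qed
  then show ?thesis
    unfolding bsum_prob_def using assms by (simp add: bernoulli_sum_insert pmf_bind)
qed

lemma bsum_prob_remove:
  assumes "finite J" "i \<in> J" "0 \<le> p i" "p i \<le> 1"
  shows "bsum_prob J p l = (1 - p i) * bsum_prob (J - {i}) p l + p i * bsum_prob_pred (J - {i}) p l"
  using bsum_prob_insert[of "J - {i}" i p l] assms by (simp add: insert_absorb)

lemma set_bernoulli_sum: "finite A \<Longrightarrow> set_pmf (bernoulli_sum_pmf A p) \<subseteq> {..card A}"
  unfolding bernoulli_sum_pmf_def by (auto intro!: card_mono)

lemma bsum_prob_nonneg: "bsum_prob A p l \<ge> 0"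
  by (simp add: bsum_prob_def)

lemma bsum_prob_zero: "finite A \<Longrightarrow> card A < l \<Longrightarrow> bsum_prob A p l = 0"
  unfolding bsum_prob_def using set_bernoulli_sum[of A p] by (auto simp: pmf_eq_0_set_pmf)

lemma bsum_prob_sum: "finite A \<Longrightarrow> card A \<le> n \<Longrightarrow> (\<Sum>l\<le>n. bsum_prob A p l) = 1"
  unfolding bsum_prob_def using set_bernoulli_sum[of A p] by (intro sum_pmf_eq_1) auto

lemma size_bias:
  assumes "finite A" "\<forall>i\<in>A. 0 \<le> p i \<and> p i \<le> 1"
  shows "real (Suc l) * bsum_prob A p (Suc l) = (\<Sum>i\<in>A. p i * bsum_prob (A - {i}) p l)"
  using assms
proof (induction A arbitrary: l rule: finite_induct)
  case empty
  then show ?case by (simp add: bsum_prob_zero)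
next
  case (insert a A)
  have pa: "0 \<le> p a" "p a \<le> 1" using insert by auto
  have IH: "real (Suc l) * bsum_prob A p (Suc l) = (\<Sum>i\<in>A. p i * bsum_prob (A - {i}) p l)" for l
    using insert by auto
  have IH_pred: "real l * bsum_prob A p l = (\<Sum>i\<in>A. p i * bsum_prob_pred (A - {i}) p l)"
    by (cases l) (simp_all add: bsum_prob_pred_def IH[simplified])
  have remove_i: "bsum_prob (insert a A - {i}) p l
      = (1 - p a) * bsum_prob (A - {i}) p l + p a * bsum_prob_pred (A - {i}) p l" if "i \<in> A" for i
  proof -
    have "insert a A - {i} = insert a (A - {i})" using that insert by auto
    then show ?thesis using bsum_prob_insert[of "A - {i}" a p l] insert pa by auto
  qed
  have "(\<Sum>i\<in>insert a A. p i * bsum_prob (insert a A - {i}) p l)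
      = p a * bsum_prob A p l + (\<Sum>i\<in>A. p i * bsum_prob (insert a A - {i}) p l)"
    using insert by simp
  also have "(\<Sum>i\<in>A. p i * bsum_prob (insert a A - {i}) p l)
      = (1 - p a) * (\<Sum>i\<in>A. p i * bsum_prob (A - {i}) p l) + p a * (\<Sum>i\<in>A. p i * bsum_prob_pred (A - {i}) p l)"
    by (simp add: remove_i sum.distrib sum_distrib_left sum_subtractf algebra_simps)
  also have "\<dots> = (1 - p a) * (real (Suc l) * bsum_prob A p (Suc l)) + p a * (real l * bsum_prob A p l)"
    by (simp only: IH IH_pred)
  also have "p a * bsum_prob A p l + \<dots> = real (Suc l) * ((1 - p a) * bsum_prob A p (Suc l) + p a * bsum_prob A p l)"
    by (simp add: algebra_simps)
  also have "(1 - p a) * bsum_prob A p (Suc l) + p a * bsum_prob A p l = bsum_prob (insert a A) p (Suc l)"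
    using bsum_prob_insert[of A a p "Suc l"] insert pa by (simp add: bsum_prob_pred_def)
  finally show ?case ..
qed

lemma expect_size_bias:
  assumes J: "finite J" "J \<noteq> {}" and p: "\<forall>i\<in>J. 0 \<le> p i \<and> p i \<le> 1"
  shows "(\<Sum>l\<le>card J. bsum_prob J p l * (real l * g l))
       = (\<Sum>i\<in>J. p i * (\<Sum>l\<le>card J. bsum_prob (J - {i}) p l * g (Suc l)))"
proof -
  obtain m where m: "card J = Suc m" using J by (metis card_0_eq not0_implies_Suc)
  have top: "bsum_prob (J - {i}) p (Suc m) = 0" if "i \<in> J" for i
    using that m J by (intro bsum_prob_zero) auto
  have "(\<Sum>l\<le>card J. bsum_prob J p l * (real l * g l))
      = (\<Sum>l\<le>m. real (Suc l) * bsum_prob J p (Suc l) * g (Suc l))"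
    unfolding m by (simp add: sum.atMost_Suc_shift mult_ac del: sum.atMost_Suc)
  also have "\<dots> = (\<Sum>l\<le>m. (\<Sum>i\<in>J. p i * bsum_prob (J - {i}) p l) * g (Suc l))"
    by (simp add: size_bias[OF J(1) p, simplified])
  also have "\<dots> = (\<Sum>i\<in>J. p i * (\<Sum>l\<le>m. bsum_prob (J - {i}) p l * g (Suc l)))"
    by (simp add: sum_distrib_right sum_distrib_left mult.assoc sum.swap[of _ J])
  also have "\<dots> = (\<Sum>i\<in>J. p i * (\<Sum>l\<le>card J. bsum_prob (J - {i}) p l * g (Suc l)))"
    by (rule sum.cong) (simp_all add: m top)
  finally show ?thesis .
qed

lemma expect_shift_remove:
  assumes J: "finite J" "i \<in> J" and p: "0 \<le> p i" "p i \<le> 1"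
  shows "(\<Sum>l\<le>card J. bsum_prob J p l * g (Suc l))
       = (1 - p i) * (\<Sum>l\<le>card J. bsum_prob (J - {i}) p l * g (Suc l))
         + p i * (\<Sum>l\<le>card J. bsum_prob (J - {i}) p l * g (Suc (Suc l)))"
proof -
  obtain m where m: "card J = Suc m" using J by (metis card_0_eq emptyE not0_implies_Suc)
  have top: "bsum_prob (J - {i}) p (Suc m) = 0"
    using J m by (intro bsum_prob_zero) auto
  have "(\<Sum>l\<le>card J. bsum_prob_pred (J - {i}) p l * g (Suc l))
      = (\<Sum>l\<le>m. bsum_prob (J - {i}) p l * g (Suc (Suc l)))"
    unfolding m by (simp add: bsum_prob_pred_def sum.atMost_Suc_shift del: sum.atMost_Suc)
  also have "\<dots> = (\<Sum>l\<le>card J. bsum_prob (J - {i}) p l * g (Suc (Suc l)))"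
    unfolding m by (simp add: top)
  finally have pred: "(\<Sum>l\<le>card J. bsum_prob_pred (J - {i}) p l * g (Suc l)) = \<dots>" .
  have "(\<Sum>l\<le>card J. bsum_prob J p l * g (Suc l))
      = (\<Sum>l\<le>card J. (1 - p i) * (bsum_prob (J - {i}) p l * g (Suc l))
                      + p i * (bsum_prob_pred (J - {i}) p l * g (Suc l)))"
    by (simp add: bsum_prob_remove[of J i p, OF J p] algebra_simps)
  also have "\<dots> = (1 - p i) * (\<Sum>l\<le>card J. bsum_prob (J - {i}) p l * g (Suc l))
      + p i * (\<Sum>l\<le>card J. bsum_prob_pred (J - {i}) p l * g (Suc l))"
    by (simp add: sum.distrib sum_distrib_left)
  finally show ?thesis by (simp only: pred)
qed

lemma stein_identity:
  assumes J: "finite J" "J \<noteq> {}" and p: "\<forall>i\<in>J. 0 \<le> p i \<and> p i \<le> 1"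
  shows "(\<Sum>l\<le>card J. bsum_prob J p l * ((\<Sum>i\<in>J. p i) * g (Suc l) - real l * g l)) =
    (\<Sum>i\<in>J. (p i)^2 * (\<Sum>l\<le>card J. bsum_prob (J-{i}) p l * (g (Suc (Suc l)) - g (Suc l))))"
proof -
  define A where "A i = (\<Sum>l\<le>card J. bsum_prob (J-{i}) p l * g (Suc l))" for i
  define B where "B i = (\<Sum>l\<le>card J. bsum_prob (J-{i}) p l * g (Suc (Suc l)))" for i
  have "(\<Sum>l\<le>card J. bsum_prob J p l * ((\<Sum>i\<in>J. p i) * g (Suc l) - real l * g l))
      = (\<Sum>i\<in>J. p i * (\<Sum>l\<le>card J. bsum_prob J p l * g (Suc l))) - (\<Sum>i\<in>J. p i * A i)"
    unfolding A_def expect_size_bias[OF J p, symmetric]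
    by (simp add: sum_subtractf sum_distrib_left sum_distrib_right algebra_simps sum.swap[of _ J])
  also have "\<dots> = (\<Sum>i\<in>J. p i * ((1 - p i) * A i + p i * B i)) - (\<Sum>i\<in>J. p i * A i)"
    using J p by (simp add: A_def B_def expect_shift_remove)
  also have "\<dots> = (\<Sum>i\<in>J. (p i)^2 * (B i - A i))"
    by (simp add: sum_subtractf[symmetric] power2_eq_square algebra_simps)
  also have "\<dots> = (\<Sum>i\<in>J. (p i)^2 * (\<Sum>l\<le>card J. bsum_prob (J-{i}) p l * (g (Suc (Suc l)) - g (Suc l))))"
    by (simp add: A_def B_def sum_subtractf algebra_simps)
  finally show ?thesis .
qed

definition bsum_tail :: "nat set \<Rightarrow> (nat \<Rightarrow> real) \<Rightarrow> nat \<Rightarrow> real" where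
  "bsum_tail A p l = measure_pmf.prob (bernoulli_sum_pmf A p) {l..}"

lemma bsum_tail_nonneg: "bsum_tail A p l \<ge> 0"
  by (simp add: bsum_tail_def)

lemma bsum_tail_le1: "bsum_tail A p l \<le> 1"
  by (simp add: bsum_tail_def)

lemma bsum_tail_complement: "bsum_tail A p l = 1 - (\<Sum>m<l. bsum_prob A p m)"
proof -
  have "{l..} = UNIV - {..<l}" by auto
  then have "bsum_tail A p l = 1 - measure_pmf.prob (bernoulli_sum_pmf A p) {..<l}"
    unfolding bsum_tail_def by (simp add: measure_pmf.finite_measure_Diff measure_pmf.prob_space)
  then show ?thesis by (simp add: measure_measure_pmf_finite bsum_prob_def)
qed

lemma bsum_tail_sum:
  assumes "finite A" "card A \<le> n"
  shows "bsum_tail A p l = (\<Sum>m\<in>{l..n}. bsum_prob A p m)"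
proof -
  let ?W = "bernoulli_sum_pmf A p"
  have "{l..} \<inter> set_pmf ?W = {l..n} \<inter> set_pmf ?W"
    using set_bernoulli_sum[of A p] assms by auto
  then have "measure_pmf.prob ?W {l..} = measure_pmf.prob ?W {l..n}"
    by (metis (no_types) measure_Int_set_pmf)
  then show ?thesis by (simp add: bsum_tail_def measure_measure_pmf_finite bsum_prob_def)
qed

lemma bsum_tail_remove_le:
  assumes "finite J" "i \<in> J" "0 \<le> p i" "p i \<le> 1"
  shows "bsum_tail (J - {i}) p l \<le> bsum_tail J p l"
proof -
  have pred: "(\<Sum>m<l. bsum_prob_pred (J - {i}) p m) \<le> (\<Sum>m<l. bsum_prob (J - {i}) p m)"
  proof (cases l)
    case (Suc l')
    have "(\<Sum>m<Suc l'. bsum_prob_pred (J - {i}) p m) = (\<Sum>m<l'. bsum_prob (J - {i}) p m)"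
      by (simp add: bsum_prob_pred_def sum.lessThan_Suc_shift del: sum.lessThan_Suc)
    also have "\<dots> \<le> (\<Sum>m<Suc l'. bsum_prob (J - {i}) p m)"
      using bsum_prob_nonneg by simp
    finally show ?thesis using Suc by simp
  qed simp
  have "(\<Sum>m<l. bsum_prob J p m) = (1 - p i) * (\<Sum>m<l. bsum_prob (J - {i}) p m)
      + p i * (\<Sum>m<l. bsum_prob_pred (J - {i}) p m)"
    by (simp add: bsum_prob_remove[of J i p, OF assms] sum.distrib sum_distrib_left)
  also have "\<dots> \<le> (1 - p i) * (\<Sum>m<l. bsum_prob (J - {i}) p m) + p i * (\<Sum>m<l. bsum_prob (J - {i}) p m)"
    using pred assms by (intro add_left_mono mult_left_mono) auto
  finally show ?thesis by (simp add: bsum_tail_complement algebra_simps)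
qed

subsection \<open>Summation by parts and a weighted-sum bound\<close>

lemma summation_by_parts:
  fixes f phi :: "nat \<Rightarrow> real"
  assumes "s \<le> e"
  shows "(\<Sum>l\<in>{s..e}. f l * phi l) = phi s * (\<Sum>l\<in>{s..e}. f l)
     + (\<Sum>m\<in>{s..<e}. (phi (Suc m) - phi m) * (\<Sum>l\<in>{Suc m..e}. f l))"
  using assms
proof (induction e rule: dec_induct)
  case base
  then show ?case by simp
next
  case (step e)
  have telescope: "(\<Sum>m\<in>{s..<Suc e}. phi (Suc m) - phi m) = phi (Suc e) - phi s"
    using step by (intro sum_Suc_diff') auto
  have "(\<Sum>m\<in>{s..<Suc e}. (phi (Suc m) - phi m) * (\<Sum>l\<in>{Suc m..Suc e}. f l))
     = (\<Sum>m\<in>{s..<Suc e}. (phi (Suc m) - phi m) * (\<Sum>l\<in>{Suc m..e}. f l) + (phi (Suc m) - phi m) * f (Suc e))"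
  proof (rule sum.cong)
    fix m assume "m \<in> {s..<Suc e}"
    then have "{Suc m..Suc e} = insert (Suc e) {Suc m..e}" by auto
    then show "(phi (Suc m) - phi m) * (\<Sum>l\<in>{Suc m..Suc e}. f l)
        = (phi (Suc m) - phi m) * (\<Sum>l\<in>{Suc m..e}. f l) + (phi (Suc m) - phi m) * f (Suc e)"
      by (simp add: algebra_simps)
  qed simp
  also have "\<dots> = (\<Sum>m\<in>{s..<Suc e}. (phi (Suc m) - phi m) * (\<Sum>l\<in>{Suc m..e}. f l))
      + (\<Sum>m\<in>{s..<Suc e}. phi (Suc m) - phi m) * f (Suc e)"
    by (simp only: sum.distrib sum_distrib_right)
  also have "\<dots> = (\<Sum>m\<in>{s..<e}. (phi (Suc m) - phi m) * (\<Sum>l\<in>{Suc m..e}. f l))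
      + (phi (Suc e) - phi s) * f (Suc e)"
    using step by (simp only: telescope) (simp add: sum.atLeastLessThan_Suc)
  finally have shifted: "(\<Sum>m\<in>{s..<Suc e}. (phi (Suc m) - phi m) * (\<Sum>l\<in>{Suc m..Suc e}. f l))
      = (\<Sum>m\<in>{s..<e}. (phi (Suc m) - phi m) * (\<Sum>l\<in>{Suc m..e}. f l)) + (phi (Suc e) - phi s) * f (Suc e)" .
  have "{s..Suc e} = insert (Suc e) {s..e}" using step by auto
  then show ?case unfolding shifted using step.IH by (simp add: algebra_simps)
qed

lemma above_floor: "nat \<lfloor>lam\<rfloor> \<le> k \<Longrightarrow> lam < real k + 1"
  by linarith

text \<open>The three estimates on the Poisson side needed to bound \<open>E[\<Delta>a(V); V < n]\<close> for a
  variable \<open>V\<close> whose tails are controlled by those of \<open>Y\<close>; \<open>l\<^sub>0 = \<lfloor>\<lambda>\<rfloor>\<close> throughout.\<close>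

context
  fixes lam :: real
  assumes lam: "lam > 0"
begin

lemma pois_weighted_incr_sum:
  assumes e: "nat \<lfloor>lam\<rfloor> \<le> e"
  shows "(\<Sum>l\<in>{nat \<lfloor>lam\<rfloor>..e}. pois lam l * cdf_incr lam l) \<le> 1 + (real e + 2 - lam)^2 / lam"
proof -
  let ?l0 = "nat \<lfloor>lam\<rfloor>"
  have l0: "real ?l0 \<le> lam" "lam < real ?l0 + 1" using lam by linarith+
  have each_term: "pois lam l * cdf_incr lam l \<le> pois lam l + (real e + 1 - lam) / lam"
    if l: "l \<in> {?l0..e}" for l
  proof -
    have "pois lam l * cdf_ratio lam l = pois_cdf lam l"
      using pois_pos[OF lam, of l] by (simp add: cdf_ratio_def)
    then have "pois lam l * cdf_incr lam l = pois lam l + pois_cdf lam l * (real l + 1 - lam) / lam"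
      by (simp add: cdf_incr_eq[OF lam] distrib_left mult.assoc[symmetric])
    also have "\<dots> \<le> pois lam l + 1 * (real e + 1 - lam) / lam"
      using l lam cdf_le1[OF lam, of l] cdf_pos[OF lam, of l] above_floor[where k = l]
      by (intro add_left_mono divide_right_mono mult_mono) (simp_all, linarith)
    finally show ?thesis by simp
  qed
  have "(\<Sum>l\<in>{?l0..e}. pois lam l * cdf_incr lam l)
      \<le> (\<Sum>l\<in>{?l0..e}. pois lam l) + real (Suc e - ?l0) * ((real e + 1 - lam) / lam)"
    using sum_mono[of "{?l0..e}", OF each_term] by (simp add: sum.distrib)
  also have "\<dots> \<le> 1 + (real e + 2 - lam) * ((real e + 2 - lam) / lam)"
  proof (intro add_mono mult_mono)
    show "(\<Sum>l\<in>{?l0..e}. pois lam l) \<le> 1" by (rule sum_pois_le1[OF lam, of _ e]) auto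
    have "real (Suc e - ?l0) = real e + 1 - real ?l0" using e by (simp add: of_nat_diff)
    then show "real (Suc e - ?l0) \<le> real e + 2 - lam" using l0 by linarith
    show "(real e + 1 - lam) / lam \<le> (real e + 2 - lam) / lam" using lam by (simp add: divide_right_mono)
    show "0 \<le> (real e + 1 - lam) / lam" using above_floor[OF e] lam by simp
  qed (use above_floor[OF e] in auto)
  finally show ?thesis by (simp add: power2_eq_square)
qed

lemma cdf_incr_times_tail:
  assumes e: "real e + 1 > lam"
  shows "cdf_incr lam e * pois_tail lam (Suc e) \<le> 2"
proof -
  have "cdf_ratio lam e * pois_tail lam (Suc e) \<le> upper_ratio lam e"
    using cdf_le1[OF lam, of e] cdf_pos[OF lam, of e] pois_pos[OF lam, of e]
    by (simp add: cdf_ratio_def upper_ratio_def tail_Suc[OF lam] divide_right_mono mult_left_le_one_le)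
  then have "cdf_ratio lam e * pois_tail lam (Suc e) * (real e + 1 - lam) / lam
      \<le> upper_ratio lam e * (real e + 1 - lam) / lam"
    using e lam by (intro divide_right_mono mult_right_mono) auto
  also have "\<dots> \<le> 1" using upper_ratio_tail[OF lam e] lam by simp
  finally have "cdf_ratio lam e * pois_tail lam (Suc e) * (real e + 1 - lam) / lam \<le> 1" .
  moreover have "pois_tail lam (Suc e) \<le> 1" using cdf_pos[OF lam, of e] by (simp add: tail_Suc[OF lam])
  moreover have "cdf_incr lam e * pois_tail lam (Suc e)
      = pois_tail lam (Suc e) + cdf_ratio lam e * pois_tail lam (Suc e) * (real e + 1 - lam) / lam"
    by (simp add: cdf_incr_eq[OF lam] algebra_simps)
  ultimately show ?thesis by linarith
qed

text \<open>Summation by parts against the Poisson weights themselves: the second differences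
  of \<open>a\<close>, weighted by Poisson tails, sum to \<open>O(1 + (e - \<lambda>)\<^sup>2/\<lambda>)\<close>.\<close>

lemma incr_diff_tail_sum:
  assumes e: "nat \<lfloor>lam\<rfloor> \<le> e"
  shows "(\<Sum>m\<in>{nat \<lfloor>lam\<rfloor>..<e}. (cdf_incr lam (Suc m) - cdf_incr lam m) * pois_tail lam (Suc m))
    \<le> 3 + (real e + 2 - lam)^2 / lam"
proof -
  let ?l0 = "nat \<lfloor>lam\<rfloor>"
  let ?d = "cdf_incr lam" and ?T = "pois_tail lam"
  have inner: "(\<Sum>m\<in>{?l0..<e}. (?d (Suc m) - ?d m) * (\<Sum>l\<in>{Suc m..e}. pois lam l))
     = (\<Sum>m\<in>{?l0..<e}. (?d (Suc m) - ?d m) * ?T (Suc m)) - (?d e - ?d ?l0) * ?T (Suc e)"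
  proof -
    have "(\<Sum>m\<in>{?l0..<e}. (?d (Suc m) - ?d m) * (\<Sum>l\<in>{Suc m..e}. pois lam l))
      = (\<Sum>m\<in>{?l0..<e}. (?d (Suc m) - ?d m) * ?T (Suc m) - (?d (Suc m) - ?d m) * ?T (Suc e))"
      by (rule sum.cong) (auto simp: sum_pois_interval[OF lam] algebra_simps)
    also have "\<dots> = (\<Sum>m\<in>{?l0..<e}. (?d (Suc m) - ?d m) * ?T (Suc m))
        - (\<Sum>m\<in>{?l0..<e}. ?d (Suc m) - ?d m) * ?T (Suc e)"
      by (simp add: sum_subtractf flip: sum_distrib_right)
    also have "(\<Sum>m\<in>{?l0..<e}. ?d (Suc m) - ?d m) = ?d e - ?d ?l0"
      using e by (intro sum_Suc_diff') auto
    finally show ?thesis .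
  qed
  have "(\<Sum>m\<in>{?l0..<e}. (?d (Suc m) - ?d m) * ?T (Suc m))
      = (\<Sum>l\<in>{?l0..e}. pois lam l * ?d l) - ?d ?l0 * ?T ?l0 + ?d e * ?T (Suc e)"
    using summation_by_parts[OF e, of "pois lam" ?d] inner e
    by (simp add: sum_pois_interval[OF lam] algebra_simps)
  moreover have "?d ?l0 * ?T ?l0 \<ge> 0"
    using cdf_incr_nonneg[OF lam] tail_pos[OF lam, of ?l0] by simp
  moreover have "?d e * ?T (Suc e) \<le> 2"
    using above_floor[OF e] by (intro cdf_incr_times_tail) auto
  ultimately show ?thesis using pois_weighted_incr_sum[OF e] by linarith
qed

text \<open>Up to \<open>l\<^sub>0\<close> the increments of \<open>a\<close> are at most \<open>1 \<le> \<Delta>a(l\<^sub>0)\<close>.\<close>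

lemma cdf_incr_below_floor:
  assumes "l \<le> nat \<lfloor>lam\<rfloor>"
  shows "cdf_incr lam l \<le> cdf_incr lam (nat \<lfloor>lam\<rfloor>)"
proof (cases "l = nat \<lfloor>lam\<rfloor>")
  case False
  with assms have "real l + 1 \<le> lam" by linarith
  then show ?thesis
    using cdf_incr_le1[OF lam, of l] cdf_incr_ge1[OF lam, of "nat \<lfloor>lam\<rfloor>"] above_floor[where k = "nat \<lfloor>lam\<rfloor>"]
    by simp
qed simp

text \<open>Above \<open>l\<^sub>0\<close>, summation by parts against \<open>f\<close> replaces \<open>f\<close> by its tails; if these are
  at most \<open>R\<close> times the Poisson tails, the previous lemma applies.\<close>

lemma weighted_incr_sum_above_floor:
  fixes f :: "nat \<Rightarrow> real"
  assumes e: "nat \<lfloor>lam\<rfloor> \<le> e" and R: "R \<ge> 0"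
    and f_tail: "\<And>m. nat \<lfloor>lam\<rfloor> \<le> m \<Longrightarrow> m < e \<Longrightarrow> (\<Sum>l\<in>{Suc m..e}. f l) \<le> R * pois_tail lam (Suc m)"
  shows "(\<Sum>l\<in>{nat \<lfloor>lam\<rfloor>..e}. f l * cdf_incr lam l)
    \<le> cdf_incr lam (nat \<lfloor>lam\<rfloor>) * (\<Sum>l\<in>{nat \<lfloor>lam\<rfloor>..e}. f l) + R * (3 + (real e + 2 - lam)^2 / lam)"
proof -
  let ?l0 = "nat \<lfloor>lam\<rfloor>" and ?d = "cdf_incr lam"
  have "(\<Sum>m\<in>{?l0..<e}. (?d (Suc m) - ?d m) * (\<Sum>l\<in>{Suc m..e}. f l))
      \<le> (\<Sum>m\<in>{?l0..<e}. R * ((?d (Suc m) - ?d m) * pois_tail lam (Suc m)))"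
  proof (rule sum_mono)
    fix m assume m: "m \<in> {?l0..<e}"
    have "?d m \<le> ?d (Suc m)"
      using m above_floor[where k = m] by (intro cdf_incr_mono[OF lam]) (simp_all, linarith)
    then show "(?d (Suc m) - ?d m) * (\<Sum>l\<in>{Suc m..e}. f l) \<le> R * ((?d (Suc m) - ?d m) * pois_tail lam (Suc m))"
      using f_tail[of m] m mult_left_mono[of _ _ "?d (Suc m) - ?d m"]
      by (metis atLeastLessThan_iff diff_ge_0_iff_ge mult.left_commute)
  qed
  also have "\<dots> \<le> R * (3 + (real e + 2 - lam)^2 / lam)"
    unfolding sum_distrib_left[symmetric] using incr_diff_tail_sum[OF e] R by (rule mult_left_mono)
  finally show ?thesis using summation_by_parts[OF e, of f ?d] by linarith
qed

text \<open>If \<open>f\<close> is a sub-probability on \<open>{..<n}\<close> whose tails beyond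
  the mean are at most \<open>R\<close> times the Poisson tails, then
  \<open>\<Sum>l<n. f l \<Delta>a(l) \<le> 2 + 1/\<lambda> + R (3 + (n + 1 - \<lambda>)\<^sup>2/\<lambda>)\<close>: up to \<open>l\<^sub>0\<close> the increments are
  at most \<open>\<Delta>a(l\<^sub>0) \<le> 2 + 1/\<lambda>\<close>, and beyond \<open>l\<^sub>0\<close> the previous lemma applies.\<close>

lemma weighted_incr_sum_bound:
  fixes f :: "nat \<Rightarrow> real" and n :: nat and R :: real
  assumes f_nonneg: "\<And>l. f l \<ge> 0" and f_total: "(\<Sum>l<n. f l) \<le> 1" and R: "R \<ge> 0"
    and f_tail: "\<And>m. lam < real m \<Longrightarrow> m < n \<Longrightarrow> (\<Sum>l\<in>{m..<n}. f l) \<le> R * pois_tail lam m"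
  shows "(\<Sum>l<n. f l * cdf_incr lam l) \<le> 2 + 1 / lam + R * (3 + (real n + 1 - lam)^2 / lam)"
proof -
  let ?l0 = "nat \<lfloor>lam\<rfloor>" and ?d = "cdf_incr lam"
  let ?rest = "R * (3 + (real n + 1 - lam)^2 / lam)"
  have below: "(\<Sum>l<m. f l * ?d l) \<le> ?d ?l0 * (\<Sum>l<m. f l)" if "m \<le> ?l0" for m
    unfolding sum_distrib_left using that f_nonneg cdf_incr_below_floor
    by (intro sum_mono) (simp add: mult.commute mult_left_mono)
  have split_bound: "(\<Sum>l<n. f l * ?d l) \<le> ?d ?l0 * (\<Sum>l<n. f l) + ?rest"
  proof (cases "n \<le> ?l0")
    case True
    then show ?thesis using below[OF True] R lam by (simp add: add_increasing2)
  next
    case False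
    then obtain e where e: "n = Suc e" "?l0 \<le> e" by (cases n) auto
    have "(\<Sum>l\<in>{Suc m..e}. f l) \<le> R * pois_tail lam (Suc m)" if m: "?l0 \<le> m" "m < e" for m
    proof -
      have "(\<Sum>l\<in>{Suc m..<n}. f l) \<le> R * pois_tail lam (Suc m)"
        using m e above_floor[where k = m] by (intro f_tail) (simp_all, linarith)
      then show ?thesis by (simp add: e(1) atLeastLessThanSuc_atLeastAtMost)
    qed
    then have "(\<Sum>l\<in>{?l0..e}. f l * ?d l) \<le> ?d ?l0 * (\<Sum>l\<in>{?l0..e}. f l) + ?rest"
      using weighted_incr_sum_above_floor[OF e(2) R, of f] by (simp add: e(1) add_ac)
    moreover have "{..<n} = {..<?l0} \<union> {?l0..e}" "{..<?l0} \<inter> {?l0..e} = {}" using e by auto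
    ultimately show ?thesis
      using below[of ?l0] by (simp add: sum.union_disjoint distrib_left)
  qed
  have "?d ?l0 * (\<Sum>l<n. f l) \<le> ?d ?l0"
  proof -
    have "?d ?l0 \<ge> 0" using cdf_incr_nonneg[OF lam] by simp
    moreover have "0 \<le> (\<Sum>l<n. f l)" using f_nonneg by (simp add: sum_nonneg)
    ultimately show ?thesis using f_total by (simp add: mult_left_le)
  qed
  then show ?thesis using split_bound cdf_incr_floor[OF lam] by linarith
qed

end

subsection \<open>The Stein solution for the tail event \<open>{Y \<ge> j}\<close>\<close>

text \<open>The solution of \<open>\<lambda> g(l+1) - l g(l) = [l \<ge> j] - P(Y \<ge> j)\<close> with \<open>g 0 = 0\<close> is
  \<open>g(m+1) = N(m) / (\<lambda> P(Y = m))\<close>, where \<open>N(m) = -P(Y \<ge> j) P(Y \<le> m)\<close> for \<open>m < j\<close> and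
  \<open>N(m) = -P(Y < j) P(Y > m)\<close> for \<open>m \<ge> j\<close>.\<close>

definition stein_num :: "real \<Rightarrow> nat \<Rightarrow> nat \<Rightarrow> real" where
  "stein_num lam j m = (if m < j then - pois_tail lam j * pois_cdf lam m
                        else - (1 - pois_tail lam j) * (1 - pois_cdf lam m))"

definition stein_sol :: "real \<Rightarrow> nat \<Rightarrow> nat \<Rightarrow> real" where
  "stein_sol lam j l = (case l of 0 \<Rightarrow> 0 | Suc m \<Rightarrow> stein_num lam j m / (lam * pois lam m))"

context
  fixes lam :: real
  assumes lam: "lam > 0"
begin

lemma lam_stein_sol_Suc: "lam * stein_sol lam j (Suc m) = stein_num lam j m / pois lam m"
  using lam pois_pos[OF lam, of m] by (simp add: stein_sol_def)

lemma stein_equation: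
  assumes j: "j \<ge> 1"
  shows "lam * stein_sol lam j (Suc l) - real l * stein_sol lam j l = (if j \<le> l then 1 else 0) - pois_tail lam j"
proof (cases l)
  case 0
  then show ?thesis
    using j pois_pos[OF lam, of 0] by (simp add: lam_stein_sol_Suc stein_num_def cdf_0[OF lam])
next
  case (Suc m)
  have p0: "pois lam m > 0" "pois lam (Suc m) > 0" using pois_pos[OF lam] by auto
  have "real (Suc m) * stein_sol lam j (Suc m) = stein_num lam j m / pois lam (Suc m)"
    using lam p0 by (simp add: stein_sol_def pois_Suc[OF lam] field_simps)
  then have "lam * stein_sol lam j (Suc l) - real l * stein_sol lam j l
      = (stein_num lam j (Suc m) - stein_num lam j m) / pois lam (Suc m)"
    unfolding Suc lam_stein_sol_Suc by (simp add: diff_divide_distrib)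
  also have "\<dots> = (if j \<le> l then 1 else 0) - pois_tail lam j"
  proof (cases "j = Suc m")
    case True
    have "pois_cdf lam m = 1 - pois_tail lam j" using tail_Suc[OF lam, of m] True by simp
    then have "stein_num lam j (Suc m) - stein_num lam j m = (1 - pois_tail lam j) * pois lam (Suc m)"
      using True by (simp add: stein_num_def cdf_Suc[OF lam] algebra_simps)
    then show ?thesis using Suc True p0 by simp
  next
    case False
    then show ?thesis using Suc p0 by (simp add: stein_num_def cdf_Suc[OF lam] field_simps)
  qed
  finally show ?thesis .
qed

lemma stein_incr_below:
  assumes "Suc (Suc l) \<le> j"
  shows "lam * (stein_sol lam j (Suc (Suc l)) - stein_sol lam j (Suc l)) = - pois_tail lam j * cdf_incr lam l"
  using assms
  by (simp add: right_diff_distrib lam_stein_sol_Suc stein_num_def cdf_incr_def cdf_ratio_def algebra_simps)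

lemma upper_ratio_decr:
  assumes l: "real l + 1 > lam"
  shows "0 \<le> upper_ratio lam l - upper_ratio lam (Suc l)" "upper_ratio lam l - upper_ratio lam (Suc l) \<le> 1"
proof -
  let ?b = "upper_ratio lam"
  have "?b l * (real l + 1) = lam + lam * ?b (Suc l)"
    using upper_ratio_rec[OF lam, of l] by (simp add: field_simps)
  then have diff: "?b l - ?b (Suc l) = (lam - ?b (Suc l) * (real l + 1 - lam)) / (real l + 1)"
    by (simp add: field_simps)
  have "?b (Suc l) * (real l + 1 - lam) \<le> ?b (Suc l) * (real (Suc l) + 1 - lam)"
    using upper_ratio_nonneg[OF lam, of "Suc l"] by (intro mult_left_mono) auto
  then have "?b (Suc l) * (real l + 1 - lam) \<le> lam"
    using upper_ratio_tail[OF lam, of "Suc l"] l by simp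
  then show "0 \<le> ?b l - ?b (Suc l)" unfolding diff by simp
  have "0 \<le> ?b (Suc l) * (real l + 1 - lam)" using upper_ratio_nonneg[OF lam, of "Suc l"] l by simp
  then show "?b l - ?b (Suc l) \<le> 1" unfolding diff using l by (simp add: divide_le_eq)
qed

lemma upper_ratio_at_threshold:
  assumes j: "real j \<ge> lam"
  shows "0 \<le> lam - upper_ratio lam j * (real j - lam)" "lam - upper_ratio lam j * (real j - lam) \<le> real j"
proof -
  have "upper_ratio lam j * (real j - lam) \<le> upper_ratio lam j * (real j + 1 - lam)"
    using upper_ratio_nonneg[OF lam, of j] by (intro mult_left_mono) auto
  then show "0 \<le> lam - upper_ratio lam j * (real j - lam)"
    using upper_ratio_tail[OF lam, of j] j by simp
  show "lam - upper_ratio lam j * (real j - lam) \<le> real j"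
  proof -
    have "0 \<le> upper_ratio lam j * (real j - lam)" using upper_ratio_nonneg[OF lam, of j] j by simp
    then show ?thesis using j by linarith
  qed
qed

lemma stein_incr_at_threshold:
  "lam * (stein_sol lam (Suc l) (Suc (Suc l)) - stein_sol lam (Suc l) (Suc l))
     = (1 - pois_tail lam (Suc l)) * ((lam - upper_ratio lam (Suc l) * (real (Suc l) - lam)) / real (Suc l))"
proof -
  define j where "j = Suc l"
  define t where "t = pois_tail lam j"
  let ?b = "upper_ratio lam"
  have pl: "pois lam l > 0" "pois lam j > 0" using pois_pos[OF lam] by auto
  have jpos: "real j > 0" by (simp add: j_def)
  have "pois_cdf lam l = 1 - t" using tail_Suc[OF lam, of l] by (simp add: t_def j_def)
  then have "lam * (stein_sol lam j (Suc j) - stein_sol lam j j) = - (1 - t) * ?b j + (1 - t) * (t / pois lam l)"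
    using pl by (simp add: right_diff_distrib lam_stein_sol_Suc stein_num_def upper_ratio_def t_def j_def)
      (simp add: field_simps)
  moreover have "t / pois lam l = lam * (1 + ?b j) / real j"
  proof -
    have "pois lam j * ?b j = 1 - pois_cdf lam j" using pl by (simp add: upper_ratio_def)
    then have "t = pois lam j * (1 + ?b j)"
      using tail_Suc[OF lam, of j] tail_rec[OF lam, of j] by (simp add: t_def algebra_simps)
    then show ?thesis using pois_Suc[OF lam, of l] pl jpos by (simp add: j_def field_simps)
  qed
  ultimately have "lam * (stein_sol lam j (Suc j) - stein_sol lam j j)
      = - (1 - t) * ?b j + (1 - t) * (lam * (1 + ?b j) / real j)"
    by simp
  also have "\<dots> = (1 - t) * ((lam - ?b j * (real j - lam)) / real j)"
    using jpos by (simp add: field_simps)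
  finally show ?thesis by (simp add: j_def t_def)
qed

lemma stein_incr_beyond_threshold:
  assumes "j \<le> l"
  shows "lam * (stein_sol lam j (Suc (Suc l)) - stein_sol lam j (Suc l))
     = (1 - pois_tail lam j) * (upper_ratio lam l - upper_ratio lam (Suc l))"
proof -
  have "stein_num lam j (Suc l) / pois lam (Suc l) = - (1 - pois_tail lam j) * upper_ratio lam (Suc l)"
    "stein_num lam j l / pois lam l = - (1 - pois_tail lam j) * upper_ratio lam l"
    using assms by (simp_all add: stein_num_def upper_ratio_def)
  then show ?thesis by (simp add: right_diff_distrib lam_stein_sol_Suc algebra_simps)
qed

lemma stein_incr_above:
  assumes j: "j \<ge> 1" "real j \<ge> lam" and l: "j \<le> Suc l"
  shows "\<bar>lam * (stein_sol lam j (Suc (Suc l)) - stein_sol lam j (Suc l))\<bar> \<le> 1"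
proof -
  have t01: "0 \<le> 1 - pois_tail lam j" "1 - pois_tail lam j \<le> 1"
    using tail_pos[OF lam, of j] tail_Suc[OF lam, of "j - 1"] cdf_pos[OF lam, of "j - 1"] j(1) by auto
  obtain x where x: "lam * (stein_sol lam j (Suc (Suc l)) - stein_sol lam j (Suc l)) = (1 - pois_tail lam j) * x"
    and x01: "0 \<le> x" "x \<le> 1"
  proof (cases "Suc l = j")
    case True
    have "0 \<le> (lam - upper_ratio lam j * (real j - lam)) / real j"
      "(lam - upper_ratio lam j * (real j - lam)) / real j \<le> 1"
      using upper_ratio_at_threshold[OF j(2)] j(1) by simp_all
    with stein_incr_at_threshold[of l] True show ?thesis by (intro that) auto
  next
    case False
    then have "j \<le> l" "real l + 1 > lam" using l j by auto
    then show ?thesis using stein_incr_beyond_threshold upper_ratio_decr that by blast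
  qed
  have "0 \<le> (1 - pois_tail lam j) * x" "(1 - pois_tail lam j) * x \<le> 1 * 1"
    using t01 x01 by (simp, intro mult_mono, simp_all)
  then show ?thesis unfolding x by simp
qed

end

subsection \<open>The Poisson tail just above the mean\<close>

text \<open>For \<open>\<lambda> \<ge> 1\<close> we compare each weight
  \<open>P(Y = j + r)\<close> with its mirror image \<open>P(Y = j - 1 - r)\<close>.\<close>

context
  fixes lam :: real
  assumes lam: "lam > 0"
begin

lemma pois_mirror_ratio:
  assumes "r < j"
  shows "pois lam (j + r) \<ge> (lam / real j)^(2*r+1) * pois lam (j - 1 - r)"
  using assms
proof (induction r)
  case 0
  then obtain i where i: "j = Suc i" by (cases j) auto
  then show ?case using pois_Suc[OF lam, of i] by simp
next
  case (Suc r)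
  define i where "i = j - 2 - r"
  have i: "j - 1 - r = Suc i" "j - 1 - Suc r = i" using Suc.prems unfolding i_def by arith+
  have jpos: "real j > 0" using Suc.prems by simp
  define A where "A = (lam / real j)^(2*r+1)"
  have A0: "A \<ge> 0" using lam jpos by (simp add: A_def)
  have IH: "pois lam (j + r) \<ge> A * pois lam (Suc i)" using Suc i by (simp add: A_def)
  have prod: "real (Suc (j + r)) * real (Suc i) \<le> real j * real j"
  proof -
    have s1: "real (Suc (j + r)) = real j + (real r + 1)" by simp
    have s2: "real (Suc i) = real j - (real r + 1)" using i Suc.prems by linarith
    have "real (Suc (j + r)) * real (Suc i) = (real j + (real r + 1)) * (real j - (real r + 1))"
      by (simp only: s1 s2)
    also have "\<dots> = real j * real j - (real r + 1)^2" by (simp add: algebra_simps power2_eq_square)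
    finally show ?thesis by simp
  qed
  have "pois lam (j + Suc r) = lam * pois lam (j + r) / real (Suc (j + r))"
    using pois_Suc[OF lam, of "j + r"] by simp
  also have "\<dots> \<ge> lam * (A * pois lam (Suc i)) / real (Suc (j + r))"
    using IH lam by (intro divide_right_mono mult_left_mono) auto
  also have "lam * (A * pois lam (Suc i)) / real (Suc (j + r))
      = (A * pois lam i) * (lam * lam / (real (Suc (j + r)) * real (Suc i)))"
    unfolding pois_Suc[OF lam] by (simp add: divide_simps mult_ac)
  also have "\<dots> \<ge> (A * pois lam i) * (lam * lam / (real j * real j))"
    using prod pois_pos[OF lam, of i] lam jpos A0
    by (intro mult_left_mono divide_left_mono) auto
  also have "(A * pois lam i) * (lam * lam / (real j * real j)) = (lam / real j)^(2 * Suc r + 1) * pois lam i"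
    by (simp add: A_def power2_eq_square field_simps)
  finally show ?case using i by simp
qed

lemma ratio_power_bound:
  assumes j: "real j \<ge> lam" "real j < lam + 1" and lam1: "lam \<ge> 1"
  shows "(lam / real j)^(2*j) \<ge> exp (-4)"
proof (cases "j = 1")
  case True
  then show ?thesis using j lam1 by simp
next
  case False
  then have j2: "real j \<ge> 2" using j lam1 by simp
  define x where "x = 1 / real j"
  have x: "0 \<le> x" "x \<le> 1/2" using j2 by (auto simp: x_def)
  have "lam / real j \<ge> (real j - 1) / real j" using j j2 by (intro divide_right_mono) auto
  then have base: "lam / real j \<ge> 1 - x" using j2 by (simp add: x_def diff_divide_distrib)
  have "real (2*j) * ln (1 - x) \<ge> real (2*j) * (- x - 2 * x^2)"
    using ln_one_minus_pos_lower_bound[OF x] by (intro mult_left_mono) auto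
  also have "real (2*j) * (- x - 2 * x^2) = -2 - 4 / real j"
    using j2 by (simp add: x_def power2_eq_square field_simps)
  also have "-2 - 4 / real j \<ge> -4" using j2 by (simp add: field_simps)
  finally have "exp (-4) \<le> exp (real (2*j) * ln (1 - x))" by simp
  also have "\<dots> = (1 - x) powr (real (2*j))"
    using x by (simp add: powr_def)
  also have "\<dots> = (1 - x)^(2*j)"
    using x powr_realpow[of "1 - x" "2*j"] by simp
  also have "\<dots> \<le> (lam / real j)^(2*j)" using base x by (intro power_mono) auto
  finally show ?thesis .
qed

lemma tail_near_mean_large:
  assumes j: "real j \<ge> lam" "real j < lam + 1" and lam1: "lam \<ge> 1"
  shows "pois_tail lam j \<ge> 1 / 90"
proof -
  define c where "c = (lam / real j)^(2*j)"
  have c4: "c \<ge> exp (-4)" using ratio_power_bound[OF j lam1] by (simp add: c_def)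
  have lj: "lam / real j \<le> 1" "0 \<le> lam / real j" using j lam by auto
  have mirror: "pois lam (j + r) \<ge> c * pois lam (j - 1 - r)" if "r < j" for r
  proof -
    have "c \<le> (lam / real j)^(2*r+1)" unfolding c_def using that lj by (intro power_decreasing) auto
    then have "c * pois lam (j - 1 - r) \<le> (lam / real j)^(2*r+1) * pois lam (j - 1 - r)"
      using pois_pos[OF lam] by (intro mult_right_mono) (auto intro: less_imp_le)
    then show ?thesis using pois_mirror_ratio[OF that] by linarith
  qed
  have upper: "(\<Sum>r<j. pois lam (j + r)) \<ge> c * (\<Sum>m<j. pois lam m)"
  proof -
    have "(\<Sum>r<j. pois lam (j + r)) \<ge> c * (\<Sum>r<j. pois lam (j - 1 - r))"
      unfolding sum_distrib_left by (rule sum_mono) (use mirror in auto)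
    then show ?thesis using sum.nat_diff_reindex[of "pois lam" j] by simp
  qed
  have total: "(\<Sum>m<j. pois lam m) + (\<Sum>r<j. pois lam (j + r)) \<le> 1"
  proof -
    have "(\<Sum>r<j. pois lam (j + r)) = (\<Sum>m\<in>{j..<j+j}. pois lam m)"
      using sum.shift_bounds_nat_ivl[of "pois lam" 0 j j] by (simp add: atLeast0LessThan add.commute)
    moreover have "(\<Sum>m<j+j. pois lam m) = (\<Sum>m<j. pois lam m) + (\<Sum>m\<in>{j..<j+j}. pois lam m)"
      by (subst sum.union_disjoint[symmetric]) (auto intro: sum.cong)
    moreover have "(\<Sum>m<j+j. pois lam m) \<le> 1" by (rule sum_pois_le1[OF lam, of _ "j+j"]) auto
    ultimately show ?thesis by simp
  qed
  have "pois_tail lam j \<ge> c * (1 - pois_tail lam j)"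
    using upper total by (simp add: pois_tail_def)
  then have "pois_tail lam j * (1 + c) \<ge> c" by (simp add: algebra_simps)
  moreover have "1 + c > 0" using c4 exp_gt_zero[of "-4::real"] by linarith
  ultimately have "pois_tail lam j \<ge> c / (1 + c)" by (simp add: pos_divide_le_eq)
  moreover have "c / (1 + c) \<ge> 1 / 90"
  proof -
    have "exp (1::real)^4 \<le> 3^4" using exp_le by (intro power_mono) auto
    then have "exp (4::real) \<le> 81" by (simp add: exp_of_nat_mult[symmetric])
    then have "exp (-4::real) \<ge> 1 / 81" by (simp add: exp_minus field_simps)
    then show ?thesis using c4 by (simp add: field_simps)
  qed
  ultimately show ?thesis by linarith
qed

lemma tail_one_small:
  assumes "lam < 1"
  shows "pois_tail lam 1 \<ge> lam / 2"
proof -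
  have "exp (- lam) * (1 + lam) \<le> exp (- lam) * exp lam"
    using exp_ge_add_one_self[of lam] by (intro mult_left_mono) auto
  then have "lam \<le> (1 - exp (- lam)) * (1 + lam)"
    by (simp add: exp_minus algebra_simps)
  then have "pois_tail lam 1 \<ge> lam / (1 + lam)"
    using lam by (simp add: pois_tail_def pois_def pos_divide_le_eq)
  also have "lam / (1 + lam) \<ge> lam / 2" using assms lam by (intro divide_left_mono) auto
  finally show ?thesis .
qed

lemma tail_near_mean:
  assumes j: "j \<ge> 1" "real j \<ge> lam" "real j < lam + 1"
  shows "1 \<le> 90 * (1 + (real j - lam)^2 / lam) * pois_tail lam j"
proof (cases "lam \<ge> 1")
  case True
  have "1 + (real j - lam)^2 / lam \<ge> 1" using lam by simp
  then have "90 * 1 * (1 / 90) \<le> 90 * (1 + (real j - lam)^2 / lam) * pois_tail lam j"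
    using tail_near_mean_large[OF j(2,3) True] by (intro mult_mono) auto
  then show ?thesis by simp
next
  case False
  then have j1: "j = 1" using j by linarith
  have "(1 + (1 - lam)^2 / lam) * (lam / 2) = ((lam - 1/2)^2 + 3/4) / 2"
    using lam by (simp add: field_simps power2_eq_square)
  also have "\<dots> \<ge> 3 / 8" by simp
  finally have "3 / 8 \<le> (1 + (1 - lam)^2 / lam) * (lam / 2)" .
  also have "\<dots> \<le> (1 + (1 - lam)^2 / lam) * pois_tail lam 1"
    using tail_one_small False lam by (intro mult_left_mono) auto
  finally have "1 \<le> 90 * ((1 + (1 - lam)^2 / lam) * pois_tail lam 1)" by linarith
  then show ?thesis using j1 by (simp only: mult.assoc of_nat_1)
qed

end

subsection \<open>The estimate for a single threshold\<close>

lemma sum_atMost_restrict: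
  fixes f :: "nat \<Rightarrow> 'a::comm_monoid_add"
  shows "(\<Sum>l\<le>n. if j \<le> l then f l else 0) = (\<Sum>l\<in>{j..n}. f l)"
proof -
  have "(\<Sum>l\<le>n. if j \<le> l then f l else 0) = (\<Sum>l\<in>{l\<in>{..n}. j \<le> l}. f l)"
    by (rule sum.inter_filter[symmetric]) simp
  also have "{l\<in>{..n}. j \<le> l} = {j..n}" by auto
  finally show ?thesis .
qed

lemma sum_sq_le_max_times_sum:
  fixes p :: "nat \<Rightarrow> real"
  assumes "finite J" "\<forall>i\<in>J. 0 \<le> p i"
  shows "(\<Sum>i\<in>J. (p i)^2) \<le> Max (p ` J) * (\<Sum>i\<in>J. p i)"
proof -
  have "(\<Sum>i\<in>J. (p i)^2) \<le> (\<Sum>i\<in>J. Max (p ` J) * p i)"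
    using assms by (intro sum_mono) (simp add: power2_eq_square mult_right_mono)
  then show ?thesis by (simp add: sum_distrib_left)
qed

context
  fixes lam :: real
  assumes lam: "lam > 0"
begin

lemma tail_diff_stein:
  assumes A: "finite A" "card A \<le> n" and j: "j \<ge> 1"
  shows "bsum_tail A p j - pois_tail lam j
       = (\<Sum>l\<le>n. bsum_prob A p l * (lam * stein_sol lam j (Suc l) - real l * stein_sol lam j l))"
proof -
  have "(\<Sum>l\<le>n. bsum_prob A p l * (lam * stein_sol lam j (Suc l) - real l * stein_sol lam j l))
      = (\<Sum>l\<le>n. (if j \<le> l then bsum_prob A p l else 0) - pois_tail lam j * bsum_prob A p l)"
    by (rule sum.cong) (simp_all add: stein_equation[OF lam j] algebra_simps)
  also have "\<dots> = (\<Sum>l\<in>{j..n}. bsum_prob A p l) - pois_tail lam j * (\<Sum>l\<le>n. bsum_prob A p l)"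
    by (simp add: sum_subtractf sum_distrib_left sum_atMost_restrict)
  also have "\<dots> = bsum_tail A p j - pois_tail lam j"
    using A by (simp add: bsum_prob_sum bsum_tail_sum)
  finally show ?thesis by simp
qed

lemma stein_incr_le:
  assumes j: "j \<ge> 1" "real j \<ge> lam"
  shows "\<bar>lam * (stein_sol lam j (Suc (Suc l)) - stein_sol lam j (Suc l))\<bar>
    \<le> (if Suc (Suc l) \<le> j then pois_tail lam j * cdf_incr lam l else 1)"
proof (cases "Suc (Suc l) \<le> j")
  case True
  then show ?thesis
    using stein_incr_below[OF lam True] tail_pos[OF lam, of j] cdf_incr_nonneg[OF lam, of l] by simp
next
  case False
  then show ?thesis using stein_incr_above[OF lam j] by simp
qed

lemma bsum_weighted_incr_bound:
  assumes V: "finite V" and j: "j \<ge> 1" and R: "R \<ge> 0"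
    and tails: "\<And>m. lam < real m \<Longrightarrow> m < j \<Longrightarrow> bsum_tail V p m \<le> R * pois_tail lam m"
  shows "(\<Sum>l<j - 1. bsum_prob V p l * cdf_incr lam l) \<le> 2 + 1 / lam + R * (3 + (real j - lam)^2 / lam)"
proof -
  have "(\<Sum>l<j - 1. bsum_prob V p l * cdf_incr lam l)
      \<le> 2 + 1 / lam + R * (3 + (real (j - 1) + 1 - lam)^2 / lam)"
  proof (rule weighted_incr_sum_bound[OF lam bsum_prob_nonneg _ R])
    show "(\<Sum>l<j - 1. bsum_prob V p l) \<le> 1"
      using bsum_tail_complement[of V p "j - 1"] bsum_tail_nonneg[of V p "j - 1"] by simp
    fix m assume m: "lam < real m" "m < j - 1"
    have "(\<Sum>l\<in>{m..<j - 1}. bsum_prob V p l) \<le> (\<Sum>l\<in>{m..card V + j}. bsum_prob V p l)"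
      using bsum_prob_nonneg by (intro sum_mono2) auto
    also have "\<dots> = bsum_tail V p m" using bsum_tail_sum[OF V, of "card V + j"] by simp
    also have "\<dots> \<le> R * pois_tail lam m" using tails m by simp
    finally show "(\<Sum>l\<in>{m..<j - 1}. bsum_prob V p l) \<le> R * pois_tail lam m" .
  qed
  then show ?thesis using j by simp
qed

text \<open>The expected increment of \<open>g\<close> under such a \<open>V\<close>: below the threshold this is the
  weighted-sum bound, above it the increments are at most \<open>1/\<lambda>\<close> and contribute
  \<open>P(V \<ge> j - 1)\<close>.\<close>

lemma expected_stein_incr_bound:
  assumes V: "finite V" "card V \<le> n" and j: "j \<ge> 1" "real j \<ge> lam" and R: "R \<ge> 0"
    and tails: "\<And>m. lam < real m \<Longrightarrow> m < j \<Longrightarrow> bsum_tail V p m \<le> R * pois_tail lam m"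
  shows "lam * \<bar>\<Sum>l\<le>n. bsum_prob V p l * (stein_sol lam j (Suc (Suc l)) - stein_sol lam j (Suc l))\<bar>
    \<le> pois_tail lam j * (2 + 1 / lam + R * (3 + (real j - lam)^2 / lam)) + bsum_tail V p (j - 1)"
proof -
  let ?g = "stein_sol lam j" and ?t = "pois_tail lam j" and ?f = "bsum_prob V p"
  have "lam * \<bar>\<Sum>l\<le>n. ?f l * (?g (Suc (Suc l)) - ?g (Suc l))\<bar>
      = \<bar>lam * (\<Sum>l\<le>n. ?f l * (?g (Suc (Suc l)) - ?g (Suc l)))\<bar>"
    using lam by (simp add: abs_mult)
  also have "\<dots> = \<bar>\<Sum>l\<le>n. ?f l * (lam * (?g (Suc (Suc l)) - ?g (Suc l)))\<bar>"
    by (simp add: sum_distrib_left mult_ac)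
  also have "\<dots> \<le> (\<Sum>l\<le>n. ?f l * (if Suc (Suc l) \<le> j then ?t * cdf_incr lam l else 1))"
  proof (rule order_trans[OF sum_abs sum_mono])
    fix l
    show "\<bar>?f l * (lam * (?g (Suc (Suc l)) - ?g (Suc l)))\<bar>
        \<le> ?f l * (if Suc (Suc l) \<le> j then ?t * cdf_incr lam l else 1)"
      using mult_left_mono[OF stein_incr_le[OF j, of l] bsum_prob_nonneg[of V p l]]
      by (simp add: abs_mult bsum_prob_nonneg)
  qed
  also have "\<dots> = (\<Sum>l\<le>n. if l < j - 1 then ?t * (?f l * cdf_incr lam l) else 0)
      + (\<Sum>l\<le>n. if j - 1 \<le> l then ?f l else 0)"
    unfolding sum.distrib[symmetric] by (rule sum.cong) (use j in auto)
  also have "(\<Sum>l\<le>n. if j - 1 \<le> l then ?f l else 0) = bsum_tail V p (j - 1)"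
    using bsum_tail_sum[OF V] by (simp add: sum_atMost_restrict)
  also have "(\<Sum>l\<le>n. if l < j - 1 then ?t * (?f l * cdf_incr lam l) else 0)
      \<le> ?t * (\<Sum>l<j - 1. ?f l * cdf_incr lam l)"
  proof -
    have "(\<Sum>l\<le>n. if l < j - 1 then ?t * (?f l * cdf_incr lam l) else 0)
        = (\<Sum>l\<in>{l\<in>{..n}. l < j - 1}. ?t * (?f l * cdf_incr lam l))"
      by (rule sum.inter_filter[symmetric]) simp
    also have "\<dots> \<le> (\<Sum>l<j - 1. ?t * (?f l * cdf_incr lam l))"
      using tail_pos[OF lam, of j] cdf_incr_nonneg[OF lam] bsum_prob_nonneg
      by (intro sum_mono2) auto
    finally show ?thesis by (simp add: sum_distrib_left)
  qed
  also have "?t * (\<Sum>l<j - 1. ?f l * cdf_incr lam l) \<le> ?t * (2 + 1 / lam + R * (3 + (real j - lam)^2 / lam))"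
    using bsum_weighted_incr_bound[OF V(1) j(1) R tails] tail_pos[OF lam, of j] by (intro mult_left_mono) auto
  finally show ?thesis by simp
qed

lemma single_threshold_bound:
  assumes J: "finite J" "J \<noteq> {}" and p: "\<forall>i\<in>J. 0 \<le> p i \<and> p i \<le> 1"
    and lam_eq: "lam = (\<Sum>i\<in>J. p i)"
    and j: "j \<ge> 1" "real j \<ge> lam" and R: "R \<ge> 0"
    and tails: "\<And>m. lam \<le> real m \<Longrightarrow> m < j \<Longrightarrow> bsum_tail J p m \<le> R * pois_tail lam m"
  shows "\<bar>bsum_tail J p j - pois_tail lam j\<bar>
    \<le> Max (p ` J) * (pois_tail lam j * (2 + 1 / lam + R * (3 + (real j - lam)^2 / lam)) + bsum_tail J p (j - 1))"
proof -
  define Q where "Q = pois_tail lam j * (2 + 1 / lam + R * (3 + (real j - lam)^2 / lam)) + bsum_tail J p (j - 1)"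
  define D where "D i = (\<Sum>l\<le>card J. bsum_prob (J - {i}) p l * (stein_sol lam j (Suc (Suc l)) - stein_sol lam j (Suc l)))" for i
  have Q_nonneg: "Q \<ge> 0"
    unfolding Q_def using tail_pos[OF lam, of j] R lam bsum_tail_nonneg[of J p "j - 1"]
    by (intro add_nonneg_nonneg mult_nonneg_nonneg) auto
  have D_bound: "lam * \<bar>D i\<bar> \<le> Q" if i: "i \<in> J" for i
  proof -
    have pi: "0 \<le> p i" "p i \<le> 1" using p i by auto
    have "lam * \<bar>D i\<bar> \<le> pois_tail lam j * (2 + 1 / lam + R * (3 + (real j - lam)^2 / lam))
        + bsum_tail (J - {i}) p (j - 1)"
      unfolding D_def using J i j R
      by (intro expected_stein_incr_bound order_trans[OF bsum_tail_remove_le[of J i p, OF J(1) i pi] tails])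
         (auto simp: card_mono)
    also have "bsum_tail (J - {i}) p (j - 1) \<le> bsum_tail J p (j - 1)"
      by (rule bsum_tail_remove_le[of J i p, OF J(1) i pi])
    finally show ?thesis by (simp add: Q_def)
  qed
  have "\<bar>bsum_tail J p j - pois_tail lam j\<bar> = \<bar>\<Sum>i\<in>J. (p i)^2 * D i\<bar>"
    using tail_diff_stein[OF J(1) order_refl j(1)] stein_identity[OF J p] by (simp add: D_def lam_eq)
  also have "\<dots> \<le> (\<Sum>i\<in>J. (p i)^2 * (Q / lam))"
  proof (rule order_trans[OF sum_abs sum_mono])
    fix i assume "i \<in> J"
    then have "\<bar>D i\<bar> \<le> Q / lam" using D_bound lam by (simp add: pos_le_divide_eq mult.commute)
    then show "\<bar>(p i)^2 * D i\<bar> \<le> (p i)^2 * (Q / lam)"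
      unfolding abs_mult abs_power2 by (rule mult_left_mono) auto
  qed
  also have "\<dots> = (\<Sum>i\<in>J. (p i)^2) * (Q / lam)" by (rule sum_distrib_right[symmetric])
  also have "\<dots> \<le> (Max (p ` J) * lam) * (Q / lam)"
    using sum_sq_le_max_times_sum[OF J(1)] p Q_nonneg lam by (intro mult_right_mono) (auto simp: lam_eq)
  also have "\<dots> = Max (p ` J) * Q" using lam by simp
  finally show ?thesis by (simp add: Q_def)
qed

end

subsection \<open>Bootstrapping over thresholds\<close>

lemma inv_mean_le:
  assumes "lam > 0" "real j \<ge> lam" "j \<ge> 1"
  shows "1 / lam \<le> 4 * (1 + (real j - lam)^2 / lam)"
proof -
  define u where "u = real j - lam"
  have u: "u \<ge> 0" "u + lam \<ge> 1" using assms by (auto simp: u_def)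
  have "1 \<le> 4 * lam + 4 * u^2"
  proof (cases "lam \<ge> 1/4")
    case False
    then have "(3/4)^2 \<le> u^2" using u by (intro power_mono) auto
    then show ?thesis using assms by (simp add: power2_eq_square)
  qed (simp add: add_increasing2)
  then have "1 / lam \<le> (4 * lam + 4 * u^2) / lam" using assms by (intro divide_right_mono) auto
  also have "\<dots> = 4 * (1 + u^2 / lam)" using assms by (simp add: field_simps)
  finally show ?thesis by (simp add: u_def)
qed

lemma ratio_mean_le:
  assumes "lam > 0" "real j \<ge> lam" "j \<ge> 1"
  shows "real j / lam \<le> 3 * (1 + (real j - lam)^2 / lam)"
proof -
  define u where "u = real j - lam"
  have u: "u \<ge> 0" "u + lam \<ge> 1" using assms by (auto simp: u_def)
  have "u \<le> 2 * lam + 2 * u^2"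
  proof (cases "u \<ge> 1/2")
    case True
    then have "u * (2 * u - 1) \<ge> 0" by simp
    then show ?thesis using assms by (simp add: power2_eq_square algebra_simps)
  next
    case False
    moreover have "u^2 \<ge> 0" by simp
    ultimately show ?thesis using u by linarith
  qed
  then have "u / lam \<le> 2 + 2 * (u^2 / lam)" using assms by (simp add: field_simps)
  moreover have "real j / lam = 1 + u / lam" using assms by (simp add: u_def field_simps)
  moreover have "u^2 / lam \<ge> 0" using assms by simp
  ultimately show ?thesis by (simp add: u_def)
qed

context
  fixes J :: "nat set" and p :: "nat \<Rightarrow> real" and lam :: real
  assumes J: "finite J" "J \<noteq> {}" and p: "\<forall>i\<in>J. 0 \<le> p i \<and> p i \<le> 1"
    and lam_eq: "lam = (\<Sum>i\<in>J. p i)" and lam: "lam > 0"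
begin

lemma max_prob_nonneg: "Max (p ` J) \<ge> 0"
  using J p by (meson Max_ge all_not_in_conv finite_imageI image_eqI order_trans)

text \<open>The tail at \<open>j - 1\<close> is comparable to the tail at \<open>j\<close>: either \<open>j - 1\<close> is itself above
  the mean and controlled by \<open>R\<close>, or \<open>j\<close> is within one of \<open>\<lambda>\<close> and \<open>P(Y \<ge> j)\<close> is large.\<close>

lemma previous_tail_bound:
  assumes j: "j \<ge> 1" "real j \<ge> lam" and R: "R \<ge> 0"
    and tails: "\<And>m. lam \<le> real m \<Longrightarrow> m < j \<Longrightarrow> bsum_tail J p m \<le> R * pois_tail lam m"
  shows "bsum_tail J p (j - 1) \<le> pois_tail lam j * (R * (1 + real j / lam) + 90 * (1 + (real j - lam)^2 / lam))"
proof -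
  let ?t = "pois_tail lam j" and ?X = "1 + (real j - lam)^2 / lam"
  have t_pos: "?t > 0" by (rule tail_pos[OF lam])
  have X_pos: "?X > 0" using lam by (simp add: add_pos_nonneg)
  show ?thesis
  proof (cases "lam \<le> real (j - 1)")
    case True
    have jj: "Suc (j - 1) = j" using j by simp
    have "pois lam j = lam * pois lam (j - 1) / real j" using pois_Suc[OF lam, of "j - 1"] jj by simp
    then have "pois lam (j - 1) = real j / lam * pois lam j" using lam j by (simp add: field_simps)
    also have "\<dots> \<le> real j / lam * ?t" using tail_ge[OF lam, of j] lam by (intro mult_left_mono) auto
    finally have "pois_tail lam (j - 1) \<le> ?t * (1 + real j / lam)"
      using tail_rec[OF lam, of "j - 1"] jj by (simp add: algebra_simps)
    then have "R * pois_tail lam (j - 1) \<le> R * (?t * (1 + real j / lam))"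
      using R by (rule mult_left_mono)
    then have "bsum_tail J p (j - 1) \<le> R * (?t * (1 + real j / lam))"
      using tails[of "j - 1"] True j by simp
    moreover have "?t * (90 * ?X) \<ge> 0" using t_pos X_pos by simp
    ultimately show ?thesis by (simp add: algebra_simps)
  next
    case False
    then have "real j < lam + 1" using j by (simp add: of_nat_diff)
    then have "1 \<le> 90 * ?X * ?t" by (rule tail_near_mean[OF lam j])
    moreover have "bsum_tail J p (j - 1) \<le> 1" by (rule bsum_tail_le1)
    moreover have "?t * (R * (1 + real j / lam)) \<ge> 0" using t_pos R lam by simp
    ultimately show ?thesis by (simp add: algebra_simps)
  qed
qed

lemma relative_error_step:
  assumes j: "j \<ge> 1" "real j \<ge> lam" and R: "R \<ge> 0"
    and tails: "\<And>m. lam \<le> real m \<Longrightarrow> m < j \<Longrightarrow> bsum_tail J p m \<le> R * pois_tail lam m"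
  shows "\<bar>bsum_tail J p j / pois_tail lam j - 1\<bar> \<le> Max (p ` J) * (1 + (real j - lam)^2 / lam) * (96 + 7 * R)"
proof -
  let ?t = "pois_tail lam j" and ?X = "1 + (real j - lam)^2 / lam" and ?pt = "Max (p ` J)"
  have t_pos: "?t > 0" by (rule tail_pos[OF lam])
  have X1: "?X \<ge> 1" using lam by simp
  have "2 + 1 / lam + R * (3 + (real j - lam)^2 / lam) + R * (1 + real j / lam) + 90 * ?X
      \<le> 2 * ?X + 4 * ?X + R * (3 * ?X) + R * (4 * ?X) + 90 * ?X"
    using inv_mean_le[OF lam j(2,1)] ratio_mean_le[OF lam j(2,1)] X1 R
    by (intro add_mono mult_left_mono) auto
  also have "\<dots> = ?X * (96 + 7 * R)" by (simp add: algebra_simps)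
  finally have bracket: "2 + 1 / lam + R * (3 + (real j - lam)^2 / lam) + R * (1 + real j / lam) + 90 * ?X
      \<le> ?X * (96 + 7 * R)" .
  have "\<bar>bsum_tail J p j - ?t\<bar>
      \<le> ?pt * (?t * (2 + 1 / lam + R * (3 + (real j - lam)^2 / lam)) + bsum_tail J p (j - 1))"
    by (rule single_threshold_bound[OF lam J p lam_eq j R tails])
  also have "\<dots> \<le> ?pt * (?t * (2 + 1 / lam + R * (3 + (real j - lam)^2 / lam))
      + ?t * (R * (1 + real j / lam) + 90 * ?X))"
    using previous_tail_bound[OF j R tails] max_prob_nonneg by (intro mult_left_mono add_left_mono)
  also have "\<dots> = ?pt * ?t * (2 + 1 / lam + R * (3 + (real j - lam)^2 / lam) + R * (1 + real j / lam) + 90 * ?X)"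
    by (simp add: algebra_simps)
  also have "\<dots> \<le> ?pt * ?t * (?X * (96 + 7 * R))"
    using bracket max_prob_nonneg t_pos by (intro mult_left_mono) auto
  finally have "\<bar>bsum_tail J p j - ?t\<bar> / ?t \<le> ?pt * ?X * (96 + 7 * R)"
    using t_pos by (simp add: divide_le_eq mult_ac)
  moreover have "bsum_tail J p j / ?t - 1 = (bsum_tail J p j - ?t) / ?t"
    using t_pos by (simp add: field_simps)
  then have "\<bar>bsum_tail J p j / ?t - 1\<bar> = \<bar>bsum_tail J p j - ?t\<bar> / ?t"
    using t_pos by simp
  ultimately show ?thesis by simp
qed

text \<open>Let \<open>R\<close> be the largest ratio \<open>P(W \<ge> m)/P(Y \<ge> m)\<close> for \<open>\<lambda> \<le> m \<le> k\<close>.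
  Every \<open>m\<close> in this range satisfies the step estimate with \<open>1 + (m-\<lambda>)\<^sup>2/\<lambda> \<le> 1 + \<xi>\<^sup>2\<close>; at
  the maximiser this gives \<open>R \<le> 1 + (96 + 7R)/14\<close>, so \<open>R \<le> 16\<close>, and then at \<open>m = k\<close> the
  relative error is at most \<open>208 p\<^sub>* (1 + \<xi>\<^sup>2)\<close>.\<close>

lemma relative_error_bound:
  assumes k: "real k \<ge> lam" and small: "Max (p ` J) * (1 + (real k - lam)^2 / lam) \<le> 1/14"
  shows "\<bar>bsum_tail J p k / pois_tail lam k - 1\<bar> \<le> 208 * Max (p ` J) * (1 + (real k - lam)^2 / lam)"
proof -
  define eps where "eps = Max (p ` J) * (1 + (real k - lam)^2 / lam)"
  define L where "L = {m::nat. lam \<le> real m \<and> m \<le> k}"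
  define rho where "rho m = bsum_tail J p m / pois_tail lam m" for m
  define R where "R = Max (rho ` L)"
  have eps: "0 \<le> eps" "eps \<le> 1/14" using max_prob_nonneg lam small by (simp_all add: eps_def)
  have L: "finite L" "k \<in> L" using k by (auto simp: L_def intro: finite_subset[of _ "{..k}"])
  have R_ge: "rho m \<le> R" if "m \<in> L" for m unfolding R_def using L that by (intro Max_ge) auto
  have "rho k \<ge> 0" unfolding rho_def using bsum_tail_nonneg[of J p k] tail_pos[OF lam, of k] by simp
  then have R: "R \<ge> 0" using R_ge[OF L(2)] by linarith
  have step: "\<bar>rho m - 1\<bar> \<le> eps * (96 + 7 * R)" if m: "m \<in> L" for m
  proof -
    have m1: "m \<ge> 1" "real m \<ge> lam" using m lam by (auto simp: L_def intro!: Suc_leI)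
    have tails: "bsum_tail J p i \<le> R * pois_tail lam i" if "lam \<le> real i" "i < m" for i
      using R_ge[of i] that m tail_pos[OF lam, of i] by (simp add: L_def rho_def pos_divide_le_eq)
    have "(real m - lam)^2 \<le> (real k - lam)^2" using m by (intro power_mono) (auto simp: L_def)
    then have "Max (p ` J) * (1 + (real m - lam)^2 / lam) \<le> eps"
      unfolding eps_def using lam max_prob_nonneg by (intro mult_left_mono add_left_mono divide_right_mono) auto
    then have "Max (p ` J) * (1 + (real m - lam)^2 / lam) * (96 + 7 * R) \<le> eps * (96 + 7 * R)"
      using R by (intro mult_right_mono) auto
    then show ?thesis using relative_error_step[OF m1 R tails] by (simp add: rho_def)
  qed
  have "R \<in> rho ` L" unfolding R_def using L by (intro Max_in) auto
  then obtain m where "m \<in> L" "R = rho m" by blast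
  then have "R \<le> 1 + eps * (96 + 7 * R)" using step by fastforce
  also have "\<dots> \<le> 1 + (1/14) * (96 + 7 * R)" using eps R by (intro add_left_mono mult_right_mono) auto
  also have "\<dots> = 55/7 + R / 2" by (simp add: field_simps)
  finally have "R \<le> 16" by linarith
  then have "eps * (96 + 7 * R) \<le> eps * (96 + 7 * 16)"
    using eps by (intro mult_left_mono) auto
  then have "\<bar>rho k - 1\<bar> \<le> eps * (96 + 7 * 16)"
    using step[OF L(2)] by linarith
  then show ?thesis by (simp add: rho_def eps_def mult_ac)
qed

end

theorem mainTheorem4:
  shows "\<exists>c::real. c > 0 \<and> (\<exists>C::real. C > 0 \<and>
    (\<forall>(J::nat set) (p::nat \<Rightarrow> real) (k::nat).
      let lam = (\<Sum>i\<in>J. p i);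
          pt = Max (p ` J);
          xi = (real k - lam) / sqrt lam
      in (finite J \<and> (\<forall>i\<in>J. 0 \<le> p i \<and> p i \<le> 1) \<and> lam > 0 \<and>
          real k \<ge> lam \<and> pt * (1 + xi\<^sup>2) \<le> c) \<longrightarrow>
         \<bar>measure_pmf.prob (bernoulli_sum_pmf J p) {k..}
            / measure_pmf.prob (poisson_pmf lam) {k..} - 1\<bar>
           \<le> C * pt * (1 + xi\<^sup>2)))"
proof -
  have main: "\<bar>measure_pmf.prob (bernoulli_sum_pmf J p) {k..} / measure_pmf.prob (poisson_pmf (\<Sum>i\<in>J. p i)) {k..} - 1\<bar>
      \<le> 208 * Max (p ` J) * (1 + ((real k - (\<Sum>i\<in>J. p i)) / sqrt (\<Sum>i\<in>J. p i))\<^sup>2)"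
    if J: "finite J" and p: "\<forall>i\<in>J. 0 \<le> p i \<and> p i \<le> 1" and lam: "(\<Sum>i\<in>J. p i) > 0"
      and k: "real k \<ge> (\<Sum>i\<in>J. p i)"
      and small: "Max (p ` J) * (1 + ((real k - (\<Sum>i\<in>J. p i)) / sqrt (\<Sum>i\<in>J. p i))\<^sup>2) \<le> 1/14"
    for J :: "nat set" and p :: "nat \<Rightarrow> real" and k :: nat
  proof -
    define lam where "lam = (\<Sum>i\<in>J. p i)"
    have xi: "((real k - lam) / sqrt lam)\<^sup>2 = (real k - lam)^2 / lam"
      using lam by (simp add: lam_def power_divide)
    have "J \<noteq> {}" using lam by auto
    from relative_error_bound[OF J this p lam_def lam[folded lam_def] k[folded lam_def]]
    show ?thesis
      using small xi tail_eq_prob[OF lam[folded lam_def]] by (simp add: bsum_tail_def lam_def)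
  qed
  show ?thesis
    unfolding Let_def by (intro exI[of _ "1/14"] exI[of _ "208::real"] conjI allI impI) (auto intro: main)
qed

end
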